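(* Let $p\ge1$ and let $\widetilde X$ be the genus-$p$ maxface obtained from a reflexive symmetric zigzag, whose Gauss map $g$ and height form $dh$ on the sheet over the upper half-plane are $g=\frac{e^{\pm i\pi/4}}{c}\prod_{j=-p}^p(z-t_j)^{a_j}$, $dh=c\,dz$ (with $t_j,a_j,c$ as in the context). Let $G(z)=\frac{1}{c^2}\prod_{j=-p}^p(z-t_j)^{2a_j}$ on $\mathbb{C}\cup\{\infty\}$. If $G'(z)\neq0$ at every point of the singular set, then the singular set of the maxface on its defining Riemann surface $\mathcal{R}_{NE}\setminus\{P_\infty\}$ consists of exactly $p+1$ pairwise disjoint loops.
   Context: A zigzag of genus $p$ is an open, properly embedded arc in $\mathbb{C}$ of alternating horizontal and vertical segments with $2p+1$ vertices $P_{-p},\dots,P_p$, an initial infinite vertical side and terminal infinite horizontal side, angles $\pi/2,3\pi/2,\dots,3\pi/2,\pi/2$ between consecutive sides; symmetric means symmetric about $y=x$; reflexive means there is a conformal map between its two complementary regions $\Omega_{NE}\to\Omega_{SW}$ sending $P_j$ to $P_{-j}$. The region $\Omega_{NE}$ is the image of the closed upper half-plane under the Schwarz–Christoffel map $F(z)=\int_i^z\prod_{j=-p}^p(t-t_j)^{a_j}dt$, where $t_{-p}<\dots<t_p$ are real with $F(t_j)=P_j$, $t_{-j}=-t_j$, and $a_j\in\{\pm\frac12\}$ alternate in sign starting from $a_{-p}=-\frac12$. $\mathcal{R}_{NE}$ is the hyperelliptic double cover, branched at the $t_j$ and $\infty=P_\infty$, of the doubled region (a sphere); the maxface has Weierstrass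 data $(g,dh)$ as stated on the sheet over the upper half-plane, extended to $\mathcal{R}_{NE}$ by reflections and the hyperelliptic involution, and $c$ is a nonzero constant. The singular set of the maxface is $\{q:|g(q)|=1\}$. *)

theory Defs
  imports "HOL-Analysis.Analysis"
begin

definition twice_exp :: "nat \<Rightarrow> int \<Rightarrow> int" where
  "twice_exp p j = (if even (j + int p) then -1 else 1)"

definition sc_exp :: "nat \<Rightarrow> int \<Rightarrow> real" where
  "sc_exp p j = of_int (twice_exp p j) / 2"

definition Gfun :: "nat \<Rightarrow> (int \<Rightarrow> real) \<Rightarrow> complex \<Rightarrow> complex \<Rightarrow> complex" where
  "Gfun p t c z = (1 / c^2) * (\<Prod>j\<in>{-int p..int p}. (z - of_real (t j)) powi (twice_exp p j))"

text \<open>The hyperelliptic surface R_NE minus the branch point P_infinity, modelled as the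
  affine curve w^2 = prod_j (z - t_j) in C x C (subspace topology); (z,w) lies over z.\<close>
definition hyp_curve :: "nat \<Rightarrow> (int \<Rightarrow> real) \<Rightarrow> (complex \<times> complex) set" where
  "hyp_curve p t = {(z, w). w^2 = (\<Prod>j\<in>{-int p..int p}. z - of_real (t j))}"

text \<open>The Gauss map g = e^{s i pi/4}/c * prod_j (z - t_j)^{a_j}, written on the curve as
  e^{s i pi/4}/c * (prod_{a_j = 1/2} (z - t_j)) / w (this is the algebraic continuation
  of the formula on the sheet over the upper half plane).  At branch points the value is
  0 or a pole; in either case |g| <> 1 there, matching the convention x/0 = 0.\<close>
definition gauss_map :: "nat \<Rightarrow> (int \<Rightarrow> real) \<Rightarrow> complex \<Rightarrow> real \<Rightarrow> complex \<times> complex \<Rightarrow> complex" where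
  "gauss_map p t c s q =
     exp (of_real (s * pi / 4) * \<i>) / c *
     (\<Prod>j\<in>{j\<in>{-int p..int p}. twice_exp p j = 1}. fst q - of_real (t j)) / snd q"

definition singular_set :: "nat \<Rightarrow> (int \<Rightarrow> real) \<Rightarrow> complex \<Rightarrow> real \<Rightarrow> (complex \<times> complex) set" where
  "singular_set p t c s = {q \<in> hyp_curve p t. cmod (gauss_map p t c s q) = 1}"

end

(*
  Write N and D for the products of the factors z - t_j with a_j = 1/2 (p of them) and
  a_j = -1/2 (p + 1 of them); their real zeros interlace, G = N / (c^2 D), and the surface is
  w^2 = N(z) D(z).  Since |g| = |N(z) / w| / |c|, the singular set is {|N(z) / w| = |c|},
  which lies over the level set |R| = |c|^2 of R = N / D, because R = (N / w)^2 there.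

  The nondegeneracy of G makes every fibre of R over that circle consist of p + 1 simple roots
  of N - y D, so R is a (p+1)-sheeted covering of the circle by the level set.  For real y,
  N - y D changes sign between consecutive zeros of D, giving p real roots; by conjugation
  symmetry the fibres over the two real points of the circle are then entirely real.  Hence
  lifting the upper half circle from a point of the fibre over |c|^2 and continuing by the
  complex-conjugate path gives a closed lift of the whole circle, one for each of the p + 1
  points.  Over each closed lift the singular set is a single simple loop, parametrised by its
  phase N(z) / w = |c| e^{2 pi i theta}, and distinct lifts give disjoint loops.
*)

theory Submission
  imports Defs "HOL-Complex_Analysis.Complex_Analysis"
    "HOL-Computational_Algebra.Fundamental_Theorem_Algebra"
begin

section \<open>Roots of polynomials\<close>

lemma card_roots_rsquarefree:
  fixes P :: "complex poly"
  assumes "rsquarefree P"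
  shows "card {z. poly P z = 0} = degree P"
proof -
  have "P \<noteq> 0" using assms by (simp add: rsquarefree_def)
  have "smult (lead_coeff P) (\<Prod>z|poly P z = 0. [:-z, 1:]) = P"
    by (rule complex_poly_decompose_rsquarefree[OF assms])
  then have "degree P = degree (\<Prod>z|poly P z = 0. [:-z, 1:])"
    using \<open>P \<noteq> 0\<close> by (metis degree_smult_eq leading_coeff_0_iff)
  also have "\<dots> = card {z. poly P z = 0}"
    by (subst degree_prod_eq_sum_degree) auto
  finally show ?thesis by simp
qed

lemma rational_fibre_card:
  fixes P Q :: "complex poly"
  assumes "degree P < degree Q" "y \<noteq> 0"
    and simple: "\<And>z. poly P z = y * poly Q z \<Longrightarrow>
                   poly (pderiv P) z * poly Q z \<noteq> poly P z * poly (pderiv Q) z"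
  shows "finite {z. poly P z = y * poly Q z}" "card {z. poly P z = y * poly Q z} = degree Q"
proof -
  define D where "D = P - smult y Q"
  have roots: "{z. poly P z = y * poly Q z} = {z. poly D z = 0}"
    by (simp add: D_def)
  have "D = P + smult (-y) Q" unfolding D_def by (simp only: diff_conv_add_uminus smult_minus_left)
  moreover have "degree P < degree (smult (-y) Q)" using assms(1,2) by simp
  ultimately have "degree D = degree (smult (-y) Q)"
    by (metis degree_add_eq_right)
  then have "degree D = degree Q" using assms(2) by simp
  then have "D \<noteq> 0" using assms(1) by auto
  then show "finite {z. poly P z = y * poly Q z}"
    unfolding roots by (rule poly_roots_finite)
  have "rsquarefree D"
    unfolding rsquarefree_roots
  proof (intro allI notI)
    fix z assume "poly D z = 0 \<and> poly (pderiv D) z = 0"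
    then have fibre: "poly P z = y * poly Q z" and "poly (pderiv P) z = y * poly (pderiv Q) z"
      by (simp_all add: D_def pderiv_diff pderiv_smult)
    then have "poly (pderiv P) z * poly Q z = poly P z * poly (pderiv Q) z"
      by (simp add: algebra_simps)
    with simple[OF fibre] show False by blast
  qed
  then show "card {z. poly P z = y * poly Q z} = degree Q"
    unfolding roots using \<open>degree D = degree Q\<close> by (simp add: card_roots_rsquarefree)
qed

lemma IVT_sign_change:
  fixes g :: "real \<Rightarrow> real"
  assumes "continuous_on {u..v} g" "u \<le> v" "g u * g v < 0"
  obtains x where "u < x" "x < v" "g x = 0"
proof -
  have "\<exists>x. u \<le> x \<and> x \<le> v \<and> g x = 0"
  proof (cases "g u \<le> 0")
    case True
    then have "0 \<le> g v" using assms(3) by (auto simp: mult_less_0_iff)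
    then show ?thesis using IVT'[of g u 0 v] True assms(1,2) by blast
  next
    case False
    then have "g v \<le> 0" using assms(3) by (auto simp: mult_less_0_iff)
    then show ?thesis using IVT2'[of g v 0 u] False assms(1,2) by fastforce
  qed
  then obtain x where "u \<le> x" "x \<le> v" "g x = 0" by blast
  moreover have "x \<noteq> u" "x \<noteq> v" using \<open>g x = 0\<close> assms(3) by auto
  ultimately show ?thesis by (intro that[of x]) auto
qed

lemma Reals_if_cnj_closed:
  fixes A B :: "complex set"
  assumes "finite A" "card A = Suc (card B)" "B \<subseteq> A \<inter> \<real>"
    and cnj_closed: "\<And>z. z \<in> A \<Longrightarrow> cnj z \<in> A"
  shows "A \<subseteq> \<real>"
proof
  fix z assume "z \<in> A"
  show "z \<in> \<real>"
  proof (rule ccontr)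
    assume "z \<notin> \<real>"
    then have "cnj z \<noteq> z" "cnj z \<notin> \<real>" by (auto simp: Reals_cnj_iff)
    moreover have "z \<notin> B" "cnj z \<notin> B" "finite B"
      using \<open>z \<notin> \<real>\<close> \<open>cnj z \<notin> \<real>\<close> assms(1,3) finite_subset by blast+
    ultimately have "card (insert z (insert (cnj z) B)) = Suc (Suc (card B))" by simp
    moreover have "card (insert z (insert (cnj z) B)) \<le> card A"
      using \<open>z \<in> A\<close> cnj_closed assms(3) by (intro card_mono[OF assms(1)]) auto
    ultimately show False using assms(2) by simp
  qed
qed

section \<open>Coverings with constant finite fibres\<close>

lemma finite_disjoint_balls:
  fixes F :: "'a::metric_space set"
  assumes "finite F"
    and good: "\<And>z. z \<in> F \<Longrightarrow> \<exists>r>0. P z r"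
    and shrink: "\<And>z r r'. P z r \<Longrightarrow> 0 < r' \<Longrightarrow> r' \<le> r \<Longrightarrow> P z r'"
  obtains d where "\<And>z. z \<in> F \<Longrightarrow> 0 < d z \<and> P z (d z)"
    and "\<And>z z'. z \<in> F \<Longrightarrow> z' \<in> F \<Longrightarrow> z \<noteq> z' \<Longrightarrow> ball z (d z) \<inter> ball z' (d z') = {}"
proof -
  have "\<exists>d>0. P z d \<and> (\<forall>z'\<in>F. z' \<noteq> z \<longrightarrow> 2 * d \<le> dist z z')" if z: "z \<in> F" for z
  proof -
    obtain r where "r > 0" "P z r" using good[OF z] by blast
    obtain e where "e > 0" "\<forall>z'\<in>F. z' \<noteq> z \<longrightarrow> e \<le> dist z z'"
      using finite_set_avoid[OF \<open>finite F\<close>] by blast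
    then show ?thesis
      using shrink[OF \<open>P z r\<close>, of "min r (e/2)"] \<open>r > 0\<close> by (intro exI[of _ "min r (e/2)"]) auto
  qed
  then obtain d where d: "\<And>z. z \<in> F \<Longrightarrow> 0 < d z \<and> P z (d z)"
    and sep: "\<And>z z'. z \<in> F \<Longrightarrow> z' \<in> F \<Longrightarrow> z' \<noteq> z \<Longrightarrow> 2 * d z \<le> dist z z'"
    by metis
  show ?thesis
  proof (rule that[OF d])
    fix z z' assume "z \<in> F" "z' \<in> F" "z \<noteq> z'"
    then have "d z + d z' \<le> dist z z'"
      using sep[of z z'] sep[of z' z] by (simp add: dist_commute)
    then show "ball z (d z) \<inter> ball z' (d z') = {}" by (rule disjoint_ballI)
  qed
qed

lemma subset_UN_if_meets_disjoint_family:
  assumes "finite A" "finite F" "card A \<le> card F"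
    and meets: "\<And>z. z \<in> F \<Longrightarrow> A \<inter> B z \<noteq> {}"
    and disj: "\<And>z z'. z \<in> F \<Longrightarrow> z' \<in> F \<Longrightarrow> z \<noteq> z' \<Longrightarrow> B z \<inter> B z' = {}"
  shows "A \<subseteq> (\<Union>z\<in>F. B z)"
proof -
  have "\<forall>z\<in>F. \<exists>x. x \<in> A \<inter> B z" using meets by blast
  then obtain pick where pick: "\<And>z. z \<in> F \<Longrightarrow> pick z \<in> A \<inter> B z" by metis
  have "inj_on pick F"
    using pick disj by (fastforce simp: inj_on_def)
  then have "card (pick ` F) = card F" by (rule card_image)
  moreover have "pick ` F \<subseteq> A" using pick by blast
  ultimately have "pick ` F = A"
    using \<open>finite A\<close> \<open>card A \<le> card F\<close> by (metis card_seteq)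
  then show ?thesis using pick by blast
qed

lemma sheet_over_injective_ball:
  fixes f :: "'a::euclidean_space \<Rightarrow> 'a"
  assumes cont: "continuous_on S f" and K: "K = S \<inter> f -` T"
    and ball: "ball z \<rho> \<subseteq> S" "inj_on f (ball z \<rho>)"
    and V: "open V" "V \<subseteq> f ` ball z \<rho>"
  shows "openin (top_of_set K) (ball z \<rho> \<inter> f -` (T \<inter> V))"
    and "\<exists>g. homeomorphism (ball z \<rho> \<inter> f -` (T \<inter> V)) (T \<inter> V) f g"
proof -
  have cont_ball: "continuous_on (ball z \<rho>) f" using cont ball(1) continuous_on_subset by blast
  have "ball z \<rho> \<inter> f -` (T \<inter> V) = K \<inter> (ball z \<rho> \<inter> f -` V)"
    using ball(1) K by auto
  then show "openin (top_of_set K) (ball z \<rho> \<inter> f -` (T \<inter> V))"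
    using continuous_open_preimage[OF cont_ball open_ball V(1)] by (metis openin_open_Int)
  obtain g where "homeomorphism (ball z \<rho>) (f ` ball z \<rho>) f g"
    using invariance_of_domain_homeomorphism[OF open_ball cont_ball order_refl ball(2)] by metis
  moreover have "f ` (ball z \<rho> \<inter> f -` (T \<inter> V)) = T \<inter> V" using V(2) by blast
  ultimately show "\<exists>g. homeomorphism (ball z \<rho> \<inter> f -` (T \<inter> V)) (T \<inter> V) f g"
    using homeomorphism_of_subsets[of _ _ f g "ball z \<rho> \<inter> f -` (T \<inter> V)"] by blast
qed

lemma covering_space_constant_finite_fibres:
  fixes f :: "'a::euclidean_space \<Rightarrow> 'a"
  assumes cont: "continuous_on S f"
    and K: "K = S \<inter> f -` T"
    and loc_inj: "\<And>z. z \<in> K \<Longrightarrow> \<exists>r>0. ball z r \<subseteq> S \<and> inj_on f (ball z r)"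
    and fibres: "\<And>y. y \<in> T \<Longrightarrow> finite (K \<inter> f -` {y}) \<and> card (K \<inter> f -` {y}) = n"
    and "n > 0"
  shows "covering_space K f T"
proof
  show "continuous_on K f" using cont K continuous_on_subset by blast
  show "f ` K = T"
  proof
    show "T \<subseteq> f ` K"
      using fibres \<open>n > 0\<close> by (fastforce simp: card_gt_0_iff)
  qed (use K in blast)
  fix y assume "y \<in> T"
  define F where "F = K \<inter> f -` {y}"
  have "finite F" "card F = n" using fibres[OF \<open>y \<in> T\<close>] by (auto simp: F_def)
  obtain d where d: "\<And>z. z \<in> F \<Longrightarrow> 0 < d z \<and> ball z (d z) \<subseteq> S \<and> inj_on f (ball z (d z))"
    and disj: "\<And>z z'. z \<in> F \<Longrightarrow> z' \<in> F \<Longrightarrow> z \<noteq> z' \<Longrightarrow> ball z (d z) \<inter> ball z' (d z') = {}"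
    by (rule finite_disjoint_balls[OF \<open>finite F\<close>, where P = "\<lambda>z r. ball z r \<subseteq> S \<and> inj_on f (ball z r)"])
       (use loc_inj F_def in auto, meson inj_on_subset subset_ball order_trans)
  define V where "V = (\<Inter>z\<in>F. f ` ball z (d z))"
  define sheet where "sheet z = ball z (d z) \<inter> f -` (T \<inter> V)" for z
  have "open V"
    unfolding V_def using \<open>finite F\<close> cont d
    by (intro open_INT ballI invariance_of_domain) (auto intro: continuous_on_subset)
  have sheet: "openin (top_of_set K) (sheet z)" "\<exists>g. homeomorphism (sheet z) (T \<inter> V) f g"
    if "z \<in> F" for z
    using sheet_over_injective_ball[OF cont K _ _ \<open>open V\<close>] d[OF that] that
    unfolding sheet_def V_def by blast+
  have "K \<inter> f -` (T \<inter> V) \<subseteq> (\<Union>z\<in>F. sheet z)"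
  proof clarify
    fix x assume "x \<in> K" "f x \<in> T" "f x \<in> V"
    have "K \<inter> f -` {f x} \<subseteq> (\<Union>z\<in>F. ball z (d z))"
    proof (rule subset_UN_if_meets_disjoint_family)
      show "K \<inter> f -` {f x} \<inter> ball z (d z) \<noteq> {}" if "z \<in> F" for z
        using \<open>f x \<in> V\<close> that d K \<open>f x \<in> T\<close> by (fastforce simp: V_def)
    qed (use fibres[OF \<open>f x \<in> T\<close>] \<open>finite F\<close> \<open>card F = n\<close> disj in auto)
    then show "x \<in> (\<Union>z\<in>F. sheet z)"
      using \<open>x \<in> K\<close> \<open>f x \<in> T\<close> \<open>f x \<in> V\<close> unfolding sheet_def by blast
  qed
  then have "\<Union>(sheet ` F) = K \<inter> f -` (T \<inter> V)"
    using d K by (auto simp: sheet_def)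
  moreover have "y \<in> T \<inter> V" using \<open>y \<in> T\<close> d by (force simp: V_def F_def)
  moreover have "openin (top_of_set T) (T \<inter> V)" using \<open>open V\<close> by blast
  moreover have "pairwise disjnt (sheet ` F)"
    using disj by (fastforce simp: pairwise_def disjnt_def sheet_def)
  ultimately show "\<exists>U. y \<in> U \<and> openin (top_of_set T) U \<and>
          (\<exists>v. \<Union>v = K \<inter> f -` U \<and> (\<forall>u\<in>v. openin (top_of_set K) u) \<and>
          pairwise disjnt v \<and> (\<forall>u\<in>v. \<exists>q. homeomorphism u U f q))"
    using sheet by (intro exI[of _ "T \<inter> V"] conjI exI[of _ "sheet ` F"]) auto
qed

section \<open>Simple loops\<close>

lemma cis_2pi_eq_imp:
  assumes "a \<in> {0..1}" "b \<in> {0..1}" "cis (2 * pi * a) = cis (2 * pi * b)"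
  shows "a = b \<or> a = 0 \<and> b = 1 \<or> a = 1 \<and> b = 0"
proof -
  have "cis (2 * pi * (a - b)) = 1"
    using assms(3) cis_divide[of "2 * pi * a" "2 * pi * b"] by (simp add: algebra_simps)
  then have "cos (2 * pi * (a - b)) = 1" by (metis cis.sel(1) one_complex.sel(1))
  then obtain m :: int where "2 * pi * (a - b) = of_int m * 2 * pi" by (metis cos_one_2pi_int)
  then have "a - b = of_int m" by simp
  moreover have "-1 \<le> a - b" "a - b \<le> 1" using assms(1,2) by auto
  ultimately have "m \<in> {-1, 0, 1}" by auto
  then show ?thesis using \<open>a - b = of_int m\<close> assms(1,2) by auto
qed

lemma unit_complex_eq_cis_2pi:
  assumes "cmod v = 1"
  obtains \<theta> where "\<theta> \<in> {0..1}" "v = cis (2 * pi * \<theta>)"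
proof -
  have "0 \<le> Arg2pi v" "Arg2pi v < 2 * pi" "v = cis (Arg2pi v)"
    using Arg2pi[of v] assms by (auto simp: is_Arg_def cis_conv_exp mult_ac)
  then show ?thesis
    using that[of "Arg2pi v / (2 * pi)"] by simp
qed

lemma indexed_disjoint_loops:
  fixes \<gamma> :: "'a \<Rightarrow> real \<Rightarrow> 'b::t2_space"
  assumes "finite Z" "card Z = n"
    and simple: "\<And>x. x \<in> Z \<Longrightarrow> simple_path (\<gamma> x) \<and> pathfinish (\<gamma> x) = pathstart (\<gamma> x)"
    and disj: "\<And>x y. x \<in> Z \<Longrightarrow> y \<in> Z \<Longrightarrow> x \<noteq> y \<Longrightarrow> path_image (\<gamma> x) \<inter> path_image (\<gamma> y) = {}"
  shows "\<exists>L. (\<forall>i<n. L i homeomorphic sphere (0::complex) 1)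
           \<and> (\<forall>i<n. \<forall>k<n. i \<noteq> k \<longrightarrow> L i \<inter> L k = {})
           \<and> (\<Union>i<n. L i) = (\<Union>x\<in>Z. path_image (\<gamma> x))"
proof -
  obtain f where f: "bij_betw f {..<n} Z"
    using ex_bij_betw_nat_finite[OF assms(1)] assms(2) by (auto simp: atLeast0LessThan)
  then have fZ: "f i \<in> Z" if "i < n" for i using that by (auto simp: bij_betw_def)
  show ?thesis
  proof (intro exI[of _ "\<lambda>i. path_image (\<gamma> (f i))"] conjI allI impI)
    show "path_image (\<gamma> (f i)) homeomorphic sphere (0::complex) 1" if "i < n" for i
      using simple[OF fZ[OF that]] by (intro homeomorphic_simple_path_image_circle) auto
    show "path_image (\<gamma> (f i)) \<inter> path_image (\<gamma> (f k)) = {}" if "i < n" "k < n" "i \<noteq> k" for i k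
    proof -
      have "f i \<noteq> f k" using f that by (auto simp: bij_betw_def inj_on_def)
      then show ?thesis using disj fZ that by blast
    qed
    show "(\<Union>i<n. path_image (\<gamma> (f i))) = (\<Union>x\<in>Z. path_image (\<gamma> x))"
    proof -
      have "f ` {..<n} = Z" using f by (simp add: bij_betw_def)
      then show ?thesis by auto
    qed
  qed
qed

section \<open>Rational functions with interlacing real zeros and poles\<close>

locale interlacing =
  fixes n :: nat and a b :: "nat \<Rightarrow> real"
  assumes a_less_b: "k < n \<Longrightarrow> a k < b k"
    and b_less_a: "k < n \<Longrightarrow> b k < a (Suc k)"
begin

definition num :: "complex poly" where
  "num = (\<Prod>k<n. [:- of_real (b k), 1:])"

definition den :: "complex poly" where
  "den = (\<Prod>k\<le>n. [:- of_real (a k), 1:])"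

definition rat_fun :: "complex \<Rightarrow> complex" where
  "rat_fun z = poly num z / poly den z"

lemma poly_num: "poly num z = (\<Prod>k<n. z - of_real (b k))"
  by (simp add: num_def poly_prod)

lemma poly_den: "poly den z = (\<Prod>k\<le>n. z - of_real (a k))"
  by (simp add: den_def poly_prod)

lemma degree_num: "degree num = n"
  unfolding num_def by (subst degree_prod_eq_sum_degree) auto

lemma degree_den: "degree den = Suc n"
  unfolding den_def by (subst degree_prod_eq_sum_degree) auto

lemma a_strict_mono: "i < j \<Longrightarrow> j \<le> n \<Longrightarrow> a i < a j"
proof (induction j)
  case (Suc j)
  then have "a j < a (Suc j)" using a_less_b b_less_a by (meson Suc_le_lessD less_trans)
  with Suc show ?case by (cases "i = j") auto
qed simp

lemma b_ne_a: "k < n \<Longrightarrow> m \<le> n \<Longrightarrow> b k \<noteq> a m"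
  using a_strict_mono[of m k] a_strict_mono[of "Suc k" m] a_less_b[of k] b_less_a[of k]
  by (cases "m \<le> k"; cases "m = k"; cases "m = Suc k") auto

lemma num_or_den_nonzero: "poly num z \<noteq> 0 \<or> poly den z \<noteq> 0"
  using b_ne_a by (fastforce simp: poly_num poly_den prod_zero_iff)

lemma poly_num_cnj: "poly num (cnj z) = cnj (poly num z)"
  by (simp add: poly_num)

lemma poly_den_cnj: "poly den (cnj z) = cnj (poly den z)"
  by (simp add: poly_den)

lemma rat_fun_cnj: "rat_fun (cnj z) = cnj (rat_fun z)"
  by (simp add: rat_fun_def poly_num_cnj poly_den_cnj)

lemma rat_fun_has_field_derivative:
  assumes "poly den z \<noteq> 0"
  shows "(rat_fun has_field_derivative
           (poly (pderiv num) z * poly den z - poly num z * poly (pderiv den) z) / (poly den z)\<^sup>2)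
         (at z)"
  unfolding rat_fun_def[abs_def] power2_eq_square
  by (rule DERIV_divide[OF poly_DERIV poly_DERIV assms])

lemma open_den_nonzero: "open {z. poly den z \<noteq> 0}"
  by (intro open_Collect_neq continuous_intros)

lemma rat_fun_holomorphic: "rat_fun holomorphic_on {z. poly den z \<noteq> 0}"
  unfolding rat_fun_def[abs_def] by (intro holomorphic_intros) auto

lemma num_sign_change: "k < n \<Longrightarrow> (\<Prod>m<n. a k - b m) * (\<Prod>m<n. a (Suc k) - b m) < 0"
proof -
  assume "k < n"
  define f where "f m = (a k - b m) * (a (Suc k) - b m)" for m
  have "(\<Prod>m<n. a k - b m) * (\<Prod>m<n. a (Suc k) - b m) = f k * (\<Prod>m\<in>{..<n} - {k}. f m)"
    using \<open>k < n\<close> by (simp add: f_def prod.distrib[symmetric] prod.remove)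
  also have "\<dots> < 0"
  proof (rule mult_neg_pos)
    show "f k < 0"
      using a_less_b b_less_a \<open>k < n\<close> by (simp add: f_def mult_neg_pos)
    show "0 < (\<Prod>m\<in>{..<n} - {k}. f m)"
    proof (rule prod_pos)
      fix m assume m: "m \<in> {..<n} - {k}"
      show "0 < f m"
      proof (cases "m < k")
        case True
        then have "b m < a k"
          using b_less_a[of m] a_strict_mono[of "Suc m" k] \<open>k < n\<close> by (cases "Suc m = k") auto
        then show ?thesis using a_strict_mono[of k "Suc k"] \<open>k < n\<close> by (simp add: f_def)
      next
        case False
        then have "a (Suc k) < b m"
          using m a_less_b[of m] a_strict_mono[of "Suc k" m] by (cases "Suc k = m") auto
        then show ?thesis using a_strict_mono[of k "Suc k"] \<open>k < n\<close>
          by (simp add: f_def mult_neg_neg)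
      qed
    qed
  qed
  finally show ?thesis .
qed


lemma root_in_gap:
  assumes "k < n"
  shows "\<exists>x. a k < x \<and> x < a (Suc k) \<and> poly num (of_real x) = of_real y * poly den (of_real x)"
proof -
  define g where "g x = (\<Prod>m<n. x - b m) - y * (\<Prod>m\<le>n. x - a m)" for x
  have "(\<Prod>m\<le>n. a k - a m) = 0" "(\<Prod>m\<le>n. a (Suc k) - a m) = 0"
    using assms by (intro prod_zero; force)+
  then have "g (a k) * g (a (Suc k)) < 0"
    using num_sign_change[OF assms] by (simp only: g_def mult_zero_right diff_zero)
  moreover have "continuous_on {a k..a (Suc k)} g"
    unfolding g_def by (intro continuous_intros)
  moreover have "a k \<le> a (Suc k)" using a_strict_mono[of k "Suc k"] assms by simp
  ultimately obtain x where "a k < x" "x < a (Suc k)" "g x = 0"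
    using IVT_sign_change by blast
  moreover have "poly num (of_real x) - of_real y * poly den (of_real x) = of_real (g x)"
    by (simp add: g_def poly_num poly_den)
  ultimately show ?thesis by auto
qed

lemma roots_in_gaps:
  obtains x where "strict_mono_on {..<n} x"
    and "\<And>k. k < n \<Longrightarrow> poly num (of_real (x k)) = of_real y * poly den (of_real (x k))"
proof -
  have "\<forall>k. \<exists>x. k < n \<longrightarrow> a k < x \<and> x < a (Suc k) \<and>
      poly num (of_real x) = of_real y * poly den (of_real x)"
    using root_in_gap by blast
  then have "\<exists>x. \<forall>k. k < n \<longrightarrow> a k < x k \<and> x k < a (Suc k) \<and>
      poly num (of_real (x k)) = of_real y * poly den (of_real (x k))"
    by (rule choice)
  then obtain x where x: "\<And>k. k < n \<Longrightarrow> a k < x k \<and> x k < a (Suc k) \<and>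
      poly num (of_real (x k)) = of_real y * poly den (of_real (x k))"
    by blast
  have "strict_mono_on {..<n} x"
  proof (rule strict_mono_onI)
    fix i j assume "i \<in> {..<n}" "j \<in> {..<n}" "i < j"
    then have "i < n" "j < n" by auto
    have "a (Suc i) \<le> a j"
      using \<open>i < j\<close> \<open>j < n\<close> a_strict_mono[of "Suc i" j] by (cases "Suc i = j") auto
    then show "x i < x j" using x[OF \<open>i < n\<close>] x[OF \<open>j < n\<close>] by linarith
  qed
  then show ?thesis using that x by blast
qed

lemma fibre_subset_Reals:
  assumes "finite {z. poly num z = of_real y * poly den z}"
    and "card {z. poly num z = of_real y * poly den z} = Suc n"
  shows "{z. poly num z = of_real y * poly den z} \<subseteq> \<real>"
proof -
  obtain x where "strict_mono_on {..<n} x"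
    and x: "\<And>k. k < n \<Longrightarrow> poly num (of_real (x k)) = of_real y * poly den (of_real (x k))"
    using roots_in_gaps[where y = y] by blast
  then have "inj_on x {..<n}" by (simp add: strict_mono_on_imp_inj_on)
  then have "inj_on (\<lambda>k. complex_of_real (x k)) {..<n}"
    by (simp add: inj_on_def)
  then have "card ((\<lambda>k. complex_of_real (x k)) ` {..<n}) = n"
    by (simp add: card_image)
  show ?thesis
  proof (rule Reals_if_cnj_closed[OF assms(1)])
    show "card {z. poly num z = of_real y * poly den z} = Suc (card ((\<lambda>k. complex_of_real (x k)) ` {..<n}))"
      using assms(2) \<open>card ((\<lambda>k. complex_of_real (x k)) ` {..<n}) = n\<close> by simp
    show "(\<lambda>k. complex_of_real (x k)) ` {..<n} \<subseteq> {z. poly num z = of_real y * poly den z} \<inter> \<real>"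
      using x by auto
    show "cnj z \<in> {z. poly num z = of_real y * poly den z}"
      if "z \<in> {z. poly num z = of_real y * poly den z}" for z
    proof -
      have "cnj (poly num z) = cnj (of_real y * poly den z)" using that by simp
      then show ?thesis by (simp add: poly_num_cnj poly_den_cnj)
    qed
  qed
qed

end

locale interlacing_level = interlacing +
  fixes r :: real
  assumes r_pos: "0 < r"
    and level_regular: "\<And>z. cmod (rat_fun z) = r\<^sup>2 \<Longrightarrow> deriv rat_fun z \<noteq> 0"
begin

lemma norm_of_real_r_sq [simp]: "cmod ((complex_of_real r)\<^sup>2) = r\<^sup>2"
  by (simp add: norm_power)

definition level :: "complex set" where
  "level = {z. cmod (rat_fun z) = r\<^sup>2}"

lemma level_nonzero: "z \<in> level \<Longrightarrow> poly num z \<noteq> 0 \<and> poly den z \<noteq> 0"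
  using r_pos by (auto simp: level_def rat_fun_def)

lemma cnj_level: "z \<in> level \<Longrightarrow> cnj z \<in> level"
  by (simp add: level_def rat_fun_cnj)

lemma rat_fun_fibre:
  assumes "cmod y = r\<^sup>2"
  shows "rat_fun -` {y} = {z. poly num z = y * poly den z}"
proof -
  have "y \<noteq> 0" using assms r_pos by auto
  then have "rat_fun z = y \<longleftrightarrow> poly num z = y * poly den z" for z
    using num_or_den_nonzero[of z] by (auto simp: rat_fun_def field_simps)
  then show ?thesis by auto
qed

lemma rat_fun_fibre_card:
  assumes "cmod y = r\<^sup>2"
  shows "finite (rat_fun -` {y})" "card (rat_fun -` {y}) = Suc n"
proof -
  have "poly (pderiv num) z * poly den z \<noteq> poly num z * poly (pderiv den) z"
    if "poly num z = y * poly den z" for z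
  proof -
    have "rat_fun z = y" using that rat_fun_fibre[OF assms] by blast
    then have "z \<in> level" using assms by (simp add: level_def)
    then have "poly den z \<noteq> 0" using level_nonzero by blast
    moreover have "deriv rat_fun z \<noteq> 0"
      using level_regular \<open>z \<in> level\<close> by (simp add: level_def)
    ultimately show ?thesis
      using DERIV_imp_deriv[OF rat_fun_has_field_derivative] by force
  qed
  moreover have "y \<noteq> 0" using assms r_pos by auto
  ultimately show "finite (rat_fun -` {y})" "card (rat_fun -` {y}) = Suc n"
    using rational_fibre_card[of num den y] degree_num degree_den assms
    by (simp_all add: rat_fun_fibre)
qed

lemma level_covering: "covering_space level rat_fun (sphere 0 (r\<^sup>2))"
proof (rule covering_space_constant_finite_fibres)
  show "continuous_on {z. poly den z \<noteq> 0} rat_fun"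
    using rat_fun_holomorphic holomorphic_on_imp_continuous_on by blast
  show "level = {z. poly den z \<noteq> 0} \<inter> rat_fun -` sphere 0 (r\<^sup>2)"
    using level_nonzero by (auto simp: level_def)
  show "\<exists>\<rho>>0. ball z \<rho> \<subseteq> {z. poly den z \<noteq> 0} \<and> inj_on rat_fun (ball z \<rho>)" if "z \<in> level" for z
    using has_complex_derivative_locally_injective[OF rat_fun_holomorphic _ open_den_nonzero]
      level_nonzero[OF that] level_regular[of z] that
    unfolding level_def by blast
  show "finite (level \<inter> rat_fun -` {y}) \<and> card (level \<inter> rat_fun -` {y}) = Suc n"
    if "y \<in> sphere 0 (r\<^sup>2)" for y
  proof -
    have "level \<inter> rat_fun -` {y} = rat_fun -` {y}" using that by (auto simp: level_def)
    then show ?thesis using rat_fun_fibre_card that by simp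
  qed
qed simp

lemma level_real: "z \<in> level \<Longrightarrow> rat_fun z \<in> \<real> \<Longrightarrow> z \<in> \<real>"
proof -
  assume "z \<in> level" "rat_fun z \<in> \<real>"
  then obtain y where y: "rat_fun z = of_real y" "cmod (of_real y) = r\<^sup>2"
    by (auto simp: level_def elim: Reals_cases)
  then have "{w. poly num w = of_real y * poly den w} \<subseteq> \<real>"
    using rat_fun_fibre_card[OF y(2)] rat_fun_fibre[OF y(2)] by (intro fibre_subset_Reals) auto
  then show "z \<in> \<real>" using y rat_fun_fibre[OF y(2)] by auto
qed


definition base_fibre :: "complex set" where
  "base_fibre = rat_fun -` {of_real (r\<^sup>2)}"

lemma base_fibre_real: "x \<in> base_fibre \<Longrightarrow> x \<in> level \<and> cnj x = x"
  using level_real[of x] r_pos by (auto simp: base_fibre_def level_def Reals_cnj_iff)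

lemma finite_base_fibre: "finite base_fibre" and card_base_fibre: "card base_fibre = Suc n"
  using rat_fun_fibre_card[of "of_real (r\<^sup>2)"] by (simp_all add: base_fibre_def)

lemma half_circle_lift:
  assumes "x \<in> base_fibre"
  obtains h where "path h" "path_image h \<subseteq> level" "pathstart h = x" "cnj (pathfinish h) = pathfinish h"
    and "\<And>\<tau>. \<tau> \<in> {0..1} \<Longrightarrow> rat_fun (h \<tau>) = of_real (r\<^sup>2) * cis (pi * \<tau>)"
proof -
  have "path (\<lambda>\<tau>. of_real (r\<^sup>2) * cis (pi * \<tau>))"
    unfolding path_def by (intro continuous_intros)
  moreover have "path_image (\<lambda>\<tau>. of_real (r\<^sup>2) * cis (pi * \<tau>)) \<subseteq> sphere 0 (r\<^sup>2)"
    by (auto simp: path_image_def norm_mult)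
  moreover have "pathstart (\<lambda>\<tau>. of_real (r\<^sup>2) * cis (pi * \<tau>)) = rat_fun x"
    using assms by (simp add: pathstart_def base_fibre_def)
  ultimately obtain h where h: "path h" "path_image h \<subseteq> level" "pathstart h = x"
    and h_lifts: "\<And>\<tau>. \<tau> \<in> {0..1} \<Longrightarrow> rat_fun (h \<tau>) = of_real (r\<^sup>2) * cis (pi * \<tau>)"
    using covering_space_lift_path_strong[OF level_covering] base_fibre_real[OF assms] by metis
  have "h 1 \<in> level" using h(2) by (auto simp: path_image_def)
  moreover have "rat_fun (h 1) \<in> \<real>" using h_lifts[of 1] by simp
  ultimately have "cnj (pathfinish h) = pathfinish h"
    using level_real by (simp add: Reals_cnj_iff pathfinish_def)
  then show ?thesis using that h h_lifts by blast
qed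

lemma circle_lift_exists:
  assumes "x \<in> base_fibre"
  shows "\<exists>\<zeta>. path \<zeta> \<and> path_image \<zeta> \<subseteq> level \<and> pathstart \<zeta> = x \<and> pathfinish \<zeta> = x \<and>
             (\<forall>\<tau>\<in>{0..1}. rat_fun (\<zeta> \<tau>) = of_real (r\<^sup>2) * cis (2 * pi * \<tau>))"
proof -
  obtain h where h: "path h" "path_image h \<subseteq> level" "pathstart h = x"
    and joins: "cnj (pathfinish h) = pathfinish h"
    and h_lifts: "\<And>\<tau>. \<tau> \<in> {0..1} \<Longrightarrow> rat_fun (h \<tau>) = of_real (r\<^sup>2) * cis (pi * \<tau>)"
    using half_circle_lift[OF assms] by blast
  have "path (cnj \<circ> h)" using h(1) unfolding path_def by (intro continuous_intros)
  moreover have "path_image (cnj \<circ> h) \<subseteq> level"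
    using h(2) cnj_level by (auto simp: path_image_def)
  moreover have "pathfinish h = pathstart (reversepath (cnj \<circ> h))"
    using joins by (simp add: pathfinish_def pathstart_def reversepath_def)
  moreover have "pathfinish (reversepath (cnj \<circ> h)) = x"
    using h(3) base_fibre_real[OF assms] by (simp add: pathstart_def)
  moreover have "rat_fun ((h +++ reversepath (cnj \<circ> h)) \<tau>) = of_real (r\<^sup>2) * cis (2 * pi * \<tau>)"
    if "\<tau> \<in> {0..1}" for \<tau>
  proof (cases "\<tau> \<le> 1/2")
    case True
    then show ?thesis using h_lifts[of "2 * \<tau>"] that by (simp add: joinpaths_def mult_ac)
  next
    case False
    then have "rat_fun ((h +++ reversepath (cnj \<circ> h)) \<tau>) = cnj (of_real (r\<^sup>2) * cis (pi * (2 - 2 * \<tau>)))"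
      using h_lifts[of "2 - 2 * \<tau>"] that by (simp add: joinpaths_def reversepath_def rat_fun_cnj)
    also have "\<dots> = of_real (r\<^sup>2) * cis (2 * pi * \<tau> - 2 * pi)"
      by (simp add: cis_cnj algebra_simps)
    finally show ?thesis by (simp add: cis_divide[symmetric])
  qed
  ultimately show ?thesis
    using h by (intro exI[of _ "h +++ reversepath (cnj \<circ> h)"]) (auto simp: path_image_join)
qed

definition circle_lift :: "complex \<Rightarrow> real \<Rightarrow> complex" where
  "circle_lift x = (SOME \<zeta>. path \<zeta> \<and> path_image \<zeta> \<subseteq> level \<and> pathstart \<zeta> = x \<and> pathfinish \<zeta> = x \<and>
                         (\<forall>\<tau>\<in>{0..1}. rat_fun (\<zeta> \<tau>) = of_real (r\<^sup>2) * cis (2 * pi * \<tau>)))"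

lemma circle_lift:
  assumes "x \<in> base_fibre"
  shows "path (circle_lift x)" "path_image (circle_lift x) \<subseteq> level"
    "pathstart (circle_lift x) = x" "pathfinish (circle_lift x) = x"
    "\<And>\<tau>. \<tau> \<in> {0..1} \<Longrightarrow> rat_fun (circle_lift x \<tau>) = of_real (r\<^sup>2) * cis (2 * pi * \<tau>)"
  using someI_ex[OF circle_lift_exists[OF assms]] unfolding circle_lift_def[symmetric] by auto


lemma circle_lift_inj:
  assumes "x \<in> base_fibre" "x' \<in> base_fibre" "\<tau> \<in> {0..1}"
    and "circle_lift x \<tau> = circle_lift x' \<tau>"
  shows "x = x'"
proof -
  have "circle_lift x 0 = circle_lift x' 0"
  proof (rule covering_space_lift_unique[of level rat_fun "sphere 0 (r\<^sup>2)" "circle_lift x" \<tau>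
        "circle_lift x'" "{0..1}" "\<lambda>\<tau>. of_real (r\<^sup>2) * cis (2 * pi * \<tau>)" 0])
    show "continuous_on {0..1} (\<lambda>\<tau>. of_real (r\<^sup>2) * cis (2 * pi * \<tau>))"
      by (intro continuous_intros)
    show "(\<lambda>\<tau>. of_real (r\<^sup>2) * cis (2 * pi * \<tau>)) \<in> {0..1} \<rightarrow> sphere 0 (r\<^sup>2)"
      by (auto simp: norm_mult)
  qed (use level_covering assms circle_lift[OF assms(1)] circle_lift[OF assms(2)] in
       \<open>auto simp: path_def path_image_def\<close>)
  then show ?thesis
    using circle_lift(3)[OF assms(1)] circle_lift(3)[OF assms(2)] by (simp add: pathstart_def)
qed

lemma circle_lift_fibre:
  assumes "\<tau> \<in> {0..1}"
  shows "rat_fun -` {of_real (r\<^sup>2) * cis (2 * pi * \<tau>)} = (\<lambda>x. circle_lift x \<tau>) ` base_fibre"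
proof -
  have "cmod (of_real (r\<^sup>2) * cis (2 * pi * \<tau>)) = r\<^sup>2" by (simp add: norm_mult)
  note fibre = rat_fun_fibre_card[OF this]
  have "(\<lambda>x. circle_lift x \<tau>) ` base_fibre \<subseteq> rat_fun -` {of_real (r\<^sup>2) * cis (2 * pi * \<tau>)}"
    using circle_lift(5) assms by auto
  moreover have "inj_on (\<lambda>x. circle_lift x \<tau>) base_fibre"
    using circle_lift_inj assms by (auto simp: inj_on_def)
  then have "card ((\<lambda>x. circle_lift x \<tau>) ` base_fibre) = Suc n"
    by (simp add: card_image card_base_fibre)
  ultimately show ?thesis
    using fibre by (metis card_subset_eq)
qed

definition double_lift :: "complex \<Rightarrow> real \<Rightarrow> complex" where
  "double_lift x = circle_lift x +++ circle_lift x"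

lemma double_lift_param:
  assumes "\<theta> \<in> {0..1}"
  obtains \<tau> where "\<tau> \<in> {0..1}" "\<And>x. double_lift x \<theta> = circle_lift x \<tau>"
    "cis (2 * pi * \<tau>) = cis (4 * pi * \<theta>)"
proof (cases "\<theta> \<le> 1/2")
  case True
  then show ?thesis
    using assms by (intro that[of "2 * \<theta>"]) (auto simp: double_lift_def joinpaths_def mult.assoc)
next
  case False
  have "cis (2 * pi * (2 * \<theta> - 1)) = cis (4 * pi * \<theta>) / cis (2 * pi)"
    by (simp add: cis_divide algebra_simps)
  then have "cis (2 * pi * (2 * \<theta> - 1)) = cis (4 * pi * \<theta>)" by simp
  then show ?thesis
    using assms False by (intro that[of "2 * \<theta> - 1"]) (auto simp: double_lift_def joinpaths_def)
qed

lemma double_lift: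
  assumes "x \<in> base_fibre"
  shows "path (double_lift x)" "double_lift x 0 = x" "double_lift x 1 = x"
    "\<And>\<theta>. \<theta> \<in> {0..1} \<Longrightarrow> rat_fun (double_lift x \<theta>) = of_real (r\<^sup>2) * cis (4 * pi * \<theta>)"
proof -
  note \<zeta> = circle_lift[OF assms]
  show "path (double_lift x)"
    unfolding double_lift_def using \<zeta>(1,3,4) by auto
  show "double_lift x 0 = x" "double_lift x 1 = x"
    using \<zeta>(3,4) by (simp_all add: double_lift_def joinpaths_def pathstart_def pathfinish_def)
  fix \<theta> :: real assume "\<theta> \<in> {0..1}"
  then obtain \<tau> where "\<tau> \<in> {0..1}" "\<And>y. double_lift y \<theta> = circle_lift y \<tau>"
    "cis (2 * pi * \<tau>) = cis (4 * pi * \<theta>)"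
    using double_lift_param by blast
  then show "rat_fun (double_lift x \<theta>) = of_real (r\<^sup>2) * cis (4 * pi * \<theta>)"
    using \<zeta>(5) by simp
qed


definition level_curve :: "(complex \<times> complex) set" where
  "level_curve = {(z, w). w\<^sup>2 = poly num z * poly den z \<and> cmod (poly num z / w) = r}"

(* The phase N(z) / w is r e^{2 pi i theta}; as it winds once around, z = double_lift x theta runs
   twice around the closed lift, because R(z) = (N(z) / w)^2 on the curve. *)
definition sheet_loop :: "complex \<Rightarrow> real \<Rightarrow> complex \<times> complex" where
  "sheet_loop x \<theta> =
     (double_lift x \<theta>, poly num (double_lift x \<theta>) / (of_real r * cis (2 * pi * \<theta>)))"

lemma sheet_loop_phase:
  assumes "x \<in> base_fibre" "\<theta> \<in> {0..1}"
  shows "poly num (fst (sheet_loop x \<theta>)) / snd (sheet_loop x \<theta>) = of_real r * cis (2 * pi * \<theta>)"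
proof -
  have "double_lift x \<theta> \<in> level"
    using double_lift(4)[OF assms] r_pos by (simp add: level_def norm_mult)
  then show ?thesis using level_nonzero r_pos by (simp add: sheet_loop_def)
qed

lemma sheet_loop_in_level_curve:
  assumes "x \<in> base_fibre" "\<theta> \<in> {0..1}"
  shows "sheet_loop x \<theta> \<in> level_curve"
proof -
  define z where "z = double_lift x \<theta>"
  have "poly num z / poly den z = of_real (r\<^sup>2) * cis (4 * pi * \<theta>)"
    using double_lift(4)[OF assms] by (simp add: z_def rat_fun_def)
  moreover have "z \<in> level"
    using double_lift(4)[OF assms] r_pos by (simp add: z_def level_def norm_mult)
  moreover have "cis (2 * pi * \<theta>) ^ 2 = cis (4 * pi * \<theta>)"
    by (simp add: power2_eq_square cis_mult mult.assoc)
  ultimately have "(poly num z / (of_real r * cis (2 * pi * \<theta>)))\<^sup>2 = poly num z * poly den z"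
    using level_nonzero r_pos by (simp add: field_simps power2_eq_square)
  then show ?thesis
    using sheet_loop_phase[OF assms] r_pos
    by (simp add: level_curve_def sheet_loop_def z_def norm_mult)
qed

lemma sheet_loop_closed: "x \<in> base_fibre \<Longrightarrow> sheet_loop x 1 = sheet_loop x 0"
  using double_lift(2,3) by (simp add: sheet_loop_def)

lemma path_sheet_loop: "x \<in> base_fibre \<Longrightarrow> path (sheet_loop x)"
  using double_lift(1) r_pos unfolding path_def sheet_loop_def[abs_def]
  by (intro continuous_intros continuous_on_compose2[of UNIV "poly num"]) auto

lemma sheet_loop_eq_imp:
  assumes "x \<in> base_fibre" "x' \<in> base_fibre" "\<theta> \<in> {0..1}" "\<theta>' \<in> {0..1}"
    and eq: "sheet_loop x \<theta> = sheet_loop x' \<theta>'"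
  shows "x = x' \<and> (\<theta> = \<theta>' \<or> \<theta> = 0 \<and> \<theta>' = 1 \<or> \<theta> = 1 \<and> \<theta>' = 0)"
proof -
  have "of_real r * cis (2 * pi * \<theta>) = of_real r * cis (2 * pi * \<theta>')"
    using sheet_loop_phase[OF assms(1,3)] sheet_loop_phase[OF assms(2,4)] eq by metis
  then have params: "\<theta> = \<theta>' \<or> \<theta> = 0 \<and> \<theta>' = 1 \<or> \<theta> = 1 \<and> \<theta>' = 0"
    using cis_2pi_eq_imp[OF assms(3,4)] r_pos by simp
  moreover have "double_lift x \<theta> = double_lift x' \<theta>"
    using params eq double_lift(2,3)[OF assms(1)] double_lift(2,3)[OF assms(2)]
    by (auto simp: sheet_loop_def)
  then have "x = x'"
    using circle_lift_inj[OF assms(1,2)] double_lift_param[OF assms(3)] by metis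
  ultimately show ?thesis by blast
qed

lemma level_curve_point_on_sheet_loop:
  assumes "(z, w) \<in> level_curve"
  obtains x \<theta> where "x \<in> base_fibre" "\<theta> \<in> {0..1}" "(z, w) = sheet_loop x \<theta>"
proof -
  have curve: "w\<^sup>2 = poly num z * poly den z" and phase: "cmod (poly num z / w) = r"
    using assms by (auto simp: level_curve_def)
  then have "poly num z / w \<noteq> 0" using r_pos by auto
  then have "w \<noteq> 0" "poly num z \<noteq> 0" by auto
  have "cmod (poly num z / w / of_real r) = cmod (poly num z / w) / r"
    using r_pos by (simp only: norm_divide norm_of_real abs_of_pos)
  then have "cmod (poly num z / w / of_real r) = 1"
    using phase r_pos by simp
  then obtain \<theta> where \<theta>: "\<theta> \<in> {0..1}" "poly num z / w / of_real r = cis (2 * pi * \<theta>)"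
    by (rule unit_complex_eq_cis_2pi)
  then have phase_eq: "poly num z / w = of_real r * cis (2 * pi * \<theta>)"
    using r_pos by (simp add: divide_eq_eq mult.commute)
  then have w: "w = poly num z / (of_real r * cis (2 * pi * \<theta>))"
    using \<open>w \<noteq> 0\<close> r_pos by (auto simp: field_simps)
  have "rat_fun z = (poly num z / w)\<^sup>2"
    using curve \<open>w \<noteq> 0\<close> \<open>poly num z \<noteq> 0\<close> by (simp add: rat_fun_def field_simps power2_eq_square)
  also have "\<dots> = of_real (r\<^sup>2) * cis (2 * pi * \<theta>) ^ 2"
    by (simp add: phase_eq power_mult_distrib)
  finally have rat_fun_z: "rat_fun z = of_real (r\<^sup>2) * cis (4 * pi * \<theta>)"
    by (simp add: power2_eq_square cis_mult mult.assoc)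
  obtain \<tau> where \<tau>: "\<tau> \<in> {0..1}" "\<And>x. double_lift x \<theta> = circle_lift x \<tau>"
    "cis (2 * pi * \<tau>) = cis (4 * pi * \<theta>)"
    using double_lift_param[OF \<theta>(1)] by blast
  have "z \<in> rat_fun -` {of_real (r\<^sup>2) * cis (2 * pi * \<tau>)}" using rat_fun_z \<tau>(3) by simp
  then obtain x where "x \<in> base_fibre" "z = double_lift x \<theta>"
    unfolding circle_lift_fibre[OF \<tau>(1)] \<tau>(2) by blast
  then show ?thesis using that \<theta>(1) by (simp add: sheet_loop_def w)
qed

lemma level_curve_eq: "level_curve = (\<Union>x\<in>base_fibre. path_image (sheet_loop x))"
proof
  show "(\<Union>x\<in>base_fibre. path_image (sheet_loop x)) \<subseteq> level_curve"
    using sheet_loop_in_level_curve by (auto simp: path_image_def)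
  show "level_curve \<subseteq> (\<Union>x\<in>base_fibre. path_image (sheet_loop x))"
  proof clarify
    fix z w assume "(z, w) \<in> level_curve"
    then obtain x \<theta> where "x \<in> base_fibre" "\<theta> \<in> {0..1}" "(z, w) = sheet_loop x \<theta>"
      by (rule level_curve_point_on_sheet_loop)
    then show "(z, w) \<in> (\<Union>x\<in>base_fibre. path_image (sheet_loop x))"
      unfolding path_image_def by blast
  qed
qed

theorem level_curve_disjoint_loops:
  "\<exists>L. (\<forall>i<n+1. L i homeomorphic sphere (0::complex) 1)
     \<and> (\<forall>i<n+1. \<forall>k<n+1. i \<noteq> k \<longrightarrow> L i \<inter> L k = {})
     \<and> (\<Union>i<n+1. L i) = level_curve"
  unfolding level_curve_eq
proof (rule indexed_disjoint_loops[OF finite_base_fibre])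
  show "card base_fibre = n + 1" by (simp add: card_base_fibre)
  show "simple_path (sheet_loop x) \<and> pathfinish (sheet_loop x) = pathstart (sheet_loop x)"
    if "x \<in> base_fibre" for x
    using that path_sheet_loop sheet_loop_closed sheet_loop_eq_imp
    by (auto simp: simple_path_def loop_free_def pathstart_def pathfinish_def)
  show "path_image (sheet_loop x) \<inter> path_image (sheet_loop x') = {}"
    if "x \<in> base_fibre" "x' \<in> base_fibre" "x \<noteq> x'" for x x'
    using that sheet_loop_eq_imp by (fastforce simp: path_image_def)
qed

end

section \<open>Zigzag data\<close>

lemma positive_exponent_indices:
  "{j \<in> {-int p..int p}. twice_exp p j = 1} = (\<lambda>k. 2 * int k + 1 - int p) ` {..<p}"
proof (intro set_eqI iffI)
  fix j assume "j \<in> {j \<in> {-int p..int p}. twice_exp p j = 1}"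
  then have j: "-int p \<le> j" "j \<le> int p" "odd (j + int p)"
    by (auto simp: twice_exp_def split: if_splits)
  then obtain m where m: "j + int p = 2 * m + 1" by (metis oddE)
  then have "0 \<le> m" "m < int p" using j by linarith+
  then show "j \<in> (\<lambda>k. 2 * int k + 1 - int p) ` {..<p}"
    using m by (intro image_eqI[of _ _ "nat m"]) auto
qed (auto simp: twice_exp_def)

lemma negative_exponent_indices:
  "{j \<in> {-int p..int p}. twice_exp p j = -1} = (\<lambda>k. 2 * int k - int p) ` {..p}"
proof (intro set_eqI iffI)
  fix j assume "j \<in> {j \<in> {-int p..int p}. twice_exp p j = -1}"
  then have j: "-int p \<le> j" "j \<le> int p" "even (j + int p)"
    by (auto simp: twice_exp_def split: if_splits)
  then obtain m where m: "j + int p = 2 * m" by (metis evenE)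
  then have "0 \<le> m" "m \<le> int p" using j by linarith+
  then show "j \<in> (\<lambda>k. 2 * int k - int p) ` {..p}"
    using m by (intro image_eqI[of _ _ "nat m"]) auto
qed (auto simp: twice_exp_def)

lemma prod_positive_exponent_indices:
  "(\<Prod>j \<in> {j \<in> {-int p..int p}. twice_exp p j = 1}. f j) = (\<Prod>k<p. f (2 * int k + 1 - int p))"
  unfolding positive_exponent_indices by (subst prod.reindex) (auto simp: inj_on_def)

lemma prod_zigzag_indices:
  fixes f :: "int \<Rightarrow> 'a::comm_monoid_mult"
  shows "(\<Prod>j\<in>{-int p..int p}. f j) =
    (\<Prod>k<p. f (2 * int k + 1 - int p)) * (\<Prod>k\<le>p. f (2 * int k - int p))"
proof -
  have pos: "{-int p..int p} \<inter> {j. twice_exp p j = 1} = {j \<in> {-int p..int p}. twice_exp p j = 1}"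
    by blast
  have neg: "{-int p..int p} - {j. twice_exp p j = 1} = {j \<in> {-int p..int p}. twice_exp p j = -1}"
    by (auto simp: twice_exp_def)
  have "(\<Prod>j\<in>{-int p..int p}. f j) =
      (\<Prod>j \<in> {j \<in> {-int p..int p}. twice_exp p j = 1}. f j) *
      (\<Prod>j \<in> {j \<in> {-int p..int p}. twice_exp p j = -1}. f j)"
    using prod.Int_Diff[of "{-int p..int p}" f "{j. twice_exp p j = 1}"] unfolding pos neg by simp
  also have "(\<Prod>j \<in> {j \<in> {-int p..int p}. twice_exp p j = -1}. f j) = (\<Prod>k\<le>p. f (2 * int k - int p))"
    unfolding negative_exponent_indices by (subst prod.reindex) (auto simp: inj_on_def)
  finally show ?thesis unfolding prod_positive_exponent_indices .
qed

locale zigzag =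
  fixes p :: nat and t :: "int \<Rightarrow> real"
  assumes t_mono: "\<And>i j. -int p \<le> i \<Longrightarrow> i < j \<Longrightarrow> j \<le> int p \<Longrightarrow> t i < t j"

(* The indices 2k - p carry the exponent -1/2 and the indices 2k + 1 - p the exponent 1/2. *)
sublocale zigzag \<subseteq> interlacing p "\<lambda>k. t (2 * int k - int p)" "\<lambda>k. t (2 * int k + 1 - int p)"
  by unfold_locales (auto intro: t_mono)

context zigzag
begin

lemma Gfun_eq: "Gfun p t c z = rat_fun z / c\<^sup>2"
proof -
  have "(\<Prod>k\<le>p. (z - of_real (t (2 * int k - int p))) powi twice_exp p (2 * int k - int p)) =
      inverse (poly den z)"
    using prod_inversef[of "\<lambda>k. z - of_real (t (2 * int k - int p))" "{..p}"]
    by (simp add: twice_exp_def poly_den power_int_minus o_def)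
  moreover have "(\<Prod>k<p. (z - of_real (t (2 * int k + 1 - int p))) powi twice_exp p (2 * int k + 1 - int p)) =
      poly num z"
    by (simp add: twice_exp_def poly_num)
  ultimately show ?thesis
    by (simp add: Gfun_def prod_zigzag_indices rat_fun_def divide_inverse)
qed

lemma hyp_curve_eq: "hyp_curve p t = {(z, w). w\<^sup>2 = poly num z * poly den z}"
  by (simp add: hyp_curve_def prod_zigzag_indices poly_num poly_den)

lemma singular_set_eq:
  assumes "c \<noteq> 0"
  shows "singular_set p t c s =
    {(z, w). w\<^sup>2 = poly num z * poly den z \<and> cmod (poly num z / w) = cmod c}"
proof -
  have "cmod (gauss_map p t c s (z, w)) = cmod (poly num z / w) / cmod c" for z w
    unfolding gauss_map_def prod_positive_exponent_indices
    by (simp add: poly_num norm_mult norm_divide)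
  then show ?thesis
    using assms by (auto simp: singular_set_def hyp_curve_eq divide_eq_1_iff)
qed

lemma level_regular_if_Gfun_regular:
  assumes "c \<noteq> 0"
    and nondeg: "\<And>z. cmod (Gfun p t c z) = 1 \<Longrightarrow> deriv (Gfun p t c) z \<noteq> 0"
    and level: "cmod (rat_fun z) = (cmod c)\<^sup>2"
  shows "deriv rat_fun z \<noteq> 0"
proof -
  have "poly den z \<noteq> 0" using level assms(1) by (auto simp: rat_fun_def)
  then obtain D where D: "(rat_fun has_field_derivative D) (at z)"
    using rat_fun_has_field_derivative by blast
  have "cmod (Gfun p t c z) = 1"
    using level assms(1) by (simp add: Gfun_eq norm_divide norm_power)
  then have "deriv (\<lambda>z. rat_fun z / c\<^sup>2) z \<noteq> 0"
    using nondeg by (simp add: Gfun_eq[abs_def])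
  then show ?thesis
    using DERIV_imp_deriv[OF D] DERIV_imp_deriv[OF DERIV_cdivide[OF D]] by auto
qed

end

theorem proposition7p1:
  fixes p :: nat and t :: "int \<Rightarrow> real" and c :: complex and s :: real
  assumes p_ge: "p \<ge> 1"
    and t_mono: "\<And>i j. -int p \<le> i \<Longrightarrow> i < j \<Longrightarrow> j \<le> int p \<Longrightarrow> t i < t j"
    and t_sym: "\<And>j. -int p \<le> j \<Longrightarrow> j \<le> int p \<Longrightarrow> t (-j) = - t j"
    and c_nz: "c \<noteq> 0"
    and s_sign: "s = 1 \<or> s = -1"
    and nondeg: "\<And>z. cmod (Gfun p t c z) = 1 \<Longrightarrow> deriv (Gfun p t c) z \<noteq> 0"
  shows "\<exists>L :: nat \<Rightarrow> (complex \<times> complex) set.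
           (\<forall>i<p+1. L i homeomorphic sphere (0::complex) 1)
         \<and> (\<forall>i<p+1. \<forall>k<p+1. i \<noteq> k \<longrightarrow> L i \<inter> L k = {})
         \<and> (\<Union>i<p+1. L i) = singular_set p t c s"
proof -
  interpret zigzag p t
    using t_mono by unfold_locales
  interpret interlacing_level p "\<lambda>k. t (2 * int k - int p)" "\<lambda>k. t (2 * int k + 1 - int p)" "cmod c"
    using c_nz level_regular_if_Gfun_regular[OF c_nz nondeg] by unfold_locales auto
  show ?thesis
    using level_curve_disjoint_loops by (simp add: singular_set_eq[OF c_nz] level_curve_def)
qed

end
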